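(* Consider the infinite-width limit ($N\to\infty$) of a two-layer linear network in the $\mu$P/mean-field parameterization with feature-learning strength $\gamma_0$ (as described in the context), trained by gradient flow on the MSE loss, with one data point per task: task $\mathcal{T}_1$ has input $\mathbf{x}_1$, task $\mathcal{T}_2$ has input $\mathbf{x}_2$, with $K^x_{11}=K^x_{22}=1$, $K^x_{12}=\rho\in[0,1]$, and both tasks have the same target $y$, and the initial residuals are $\Delta_1(0)=\Delta_2(0)=y$. Train on $\mathcal{T}_1$ only, for time $t$. Writing $\Delta_2(t)=\Delta_2^{(0)}(t)+\gamma_0\Delta_2^{(1)}(t)+\gamma_0^2\Delta_2^{(2)}(t)+O(\gamma_0^3)$, one has $\Delta_2^{(1)}\equiv 0$, $\lim_{t\to\infty}\Delta_2^{(0)}(t)=y(1-\rho)$ and $\lim_{t\to\infty}\Delta_2^{(2)}(t)=0$. Consequently the loss on task $\mathcal{T}_2$ after infinitely long training on $\mathcal{T}_1$ is $\frac{y^2}{2}(1-\rho)^2+O(\gamma_0^3)$, independent of $\gamma_0$ up to second order.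
   Context: Network: $f(\mathbf{x})=\frac{1}{\gamma_0N}\mathbf{w}\cdot\mathbf{h}(\mathbf{x})$, $\mathbf{h}(\mathbf{x})=D^{-1/2}\mathbf{W}^0\mathbf{x}$, weights initialized i.i.d. $\mathcal{N}(0,1)$, learning rate $\gamma_0^2N$. $K^x_{ij}=\frac1D\mathbf{x}_i\cdot\mathbf{x}_j$. Residual $\Delta_i=y-f(\mathbf{x}_i)$; in the infinite-width limit, during training on task $\mathcal{T}_1$, $\frac{d}{dt}\Delta_i=-K_{i1}(t)\Delta_1$ where $K_{ij}=\Phi_{ij}+G\,K^x_{ij}$ with limiting kernels $\Phi_{ij}=\mathbb{E}[h_ih_j]$, $G=\mathbb{E}[z^2]$ computed from the single-site process $h_i(t)=\chi_i+\gamma_0\int_0^t\Delta_1(s)z(s)K^x_{i1}ds$, $z(t)=\xi+\gamma_0\int_0^t\Delta_1(s)h_1(s)ds$, where $(\chi_1,\chi_2)$ is centered Gaussian with covariance $K^x$ and $\xi\sim\mathcal{N}(0,1)$ independent. The expansion is in powers of $\gamma_0$ with $\gamma_0$-independent coefficients. The loss on task $\mathcal{T}_2$ is $\frac12\Delta_2^2$. *)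

theory Defs
  imports "HOL-Probability.Probability" "HOL-Library.Landau_Symbols"
begin

definition Kx :: "real \<Rightarrow> nat \<Rightarrow> nat \<Rightarrow> real" where
  "Kx \<rho> i j = (if i = j then 1 else \<rho>)"

definition Kker :: "'a measure \<Rightarrow> real \<Rightarrow> (nat \<Rightarrow> real \<Rightarrow> 'a \<Rightarrow> real)
    \<Rightarrow> (real \<Rightarrow> 'a \<Rightarrow> real) \<Rightarrow> nat \<Rightarrow> nat \<Rightarrow> real \<Rightarrow> real" where
  "Kker M \<rho> h z i j t =
     (\<integral>\<omega>. h i t \<omega> * h j t \<omega> \<partial>M) + (\<integral>\<omega>. (z t \<omega>)\<^sup>2 \<partial>M) * Kx \<rho> i j"

text \<open>The infinite-width (DMFT) dynamics while training on task T1 (single point x1),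
  for feature learning strength g0, target y, residuals Delta 1, Delta 2 (time t \<ge> 0),
  single-site fields h 1, h 2, z driven by the Gaussian sources chi 1, chi 2, xi.\<close>
definition iw_dynamics ::
  "'a measure \<Rightarrow> real \<Rightarrow> real \<Rightarrow> real \<Rightarrow> (nat \<Rightarrow> 'a \<Rightarrow> real) \<Rightarrow> ('a \<Rightarrow> real)
   \<Rightarrow> (nat \<Rightarrow> real \<Rightarrow> real) \<Rightarrow> (nat \<Rightarrow> real \<Rightarrow> 'a \<Rightarrow> real) \<Rightarrow> (real \<Rightarrow> 'a \<Rightarrow> real) \<Rightarrow> bool" where
  "iw_dynamics M \<rho> g0 y chi xi \<Delta> h z \<longleftrightarrow>
     (\<forall>i\<in>{1,2}. \<Delta> i 0 = y) \<and>
     (\<forall>i\<in>{1,2}. \<forall>t\<ge>0. \<forall>\<omega>\<in>space M.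
        ((\<lambda>s. g0 * \<Delta> 1 s * z s \<omega> * Kx \<rho> i 1) has_integral (h i t \<omega> - chi i \<omega>)) {0..t}) \<and>
     (\<forall>t\<ge>0. \<forall>\<omega>\<in>space M.
        ((\<lambda>s. g0 * \<Delta> 1 s * h 1 s \<omega>) has_integral (z t \<omega> - xi \<omega>)) {0..t}) \<and>
     (\<forall>i\<in>{1,2}. \<forall>t\<ge>0.
        (\<Delta> i has_real_derivative (- Kker M \<rho> h z i 1 t * \<Delta> 1 t)) (at t within {0..}))"

end

theory Submission
  imports Defs "HOL-Real_Asymp.Real_Asymp"
begin

text \<open>
  The single-site equations are linear in \<open>(h\<^sub>1, z)\<close> with rate \<open>\<gamma>\<^sub>0 \<Delta>\<^sub>1\<close>, so the fields
  are the Gaussian sources rotated hyperbolically by the angle \<open>\<tau> = \<gamma>\<^sub>0 \<integral>\<^sub>0\<^sup>t \<Delta>\<^sub>1\<close>.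
  Hence \<open>K\<^sub>1\<^sub>1 = 2 cosh 2\<tau>\<close> and \<open>K\<^sub>2\<^sub>1 = \<rho> K\<^sub>1\<^sub>1\<close>, which gives
  \<open>\<Delta>\<^sub>2 = y (1 - \<rho>) + \<rho> \<Delta>\<^sub>1\<close> exactly and leaves the planar flow
  \<open>\<Delta>\<^sub>1' = -2 cosh (2\<tau>) \<Delta>\<^sub>1\<close>, \<open>\<tau>' = \<gamma>\<^sub>0 \<Delta>\<^sub>1\<close>. As \<open>cosh \<ge> 1\<close>, \<open>\<Delta>\<^sub>1\<close> decays at least
  like \<open>y e\<^sup>-\<^sup>2\<^sup>t\<close> for every \<open>\<gamma>\<^sub>0\<close>, which gives the limiting loss. Since \<open>\<tau> = O(\<gamma>\<^sub>0)\<close> and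
  \<open>cosh 2\<tau> = 1 + 2\<tau>\<^sup>2 + O(\<tau>\<^sup>4)\<close>, the decay rate is perturbed only at order \<open>\<gamma>\<^sub>0\<^sup>2\<close>;
  integrating the first-order correction once more gives
  \<open>\<Delta>\<^sub>1 = y e\<^sup>-\<^sup>2\<^sup>t - \<gamma>\<^sub>0\<^sup>2 y\<^sup>3 e\<^sup>-\<^sup>2\<^sup>t J(t) + O(\<gamma>\<^sub>0\<^sup>4)\<close> uniformly on bounded time
  intervals, where \<open>J(t) = \<integral>\<^sub>0\<^sup>t (1 - e\<^sup>-\<^sup>2\<^sup>s)\<^sup>2 ds\<close> and \<open>e\<^sup>-\<^sup>2\<^sup>t J(t) \<longrightarrow> 0\<close>.
\<close>

lemma DERIV_within_nonpos_imp_nonincreasing: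
  fixes f f' :: "real \<Rightarrow> real"
  assumes deriv: "\<And>t. t \<in> {a..b} \<Longrightarrow> (f has_real_derivative f' t) (at t within {a..b})"
    and nonpos: "\<And>t. t \<in> {a..b} \<Longrightarrow> f' t \<le> 0"
    and "a \<le> x" "x \<le> y" "y \<le> b"
  shows "f y \<le> f x"
proof -
  have "continuous_on {x..y} f"
    using DERIV_continuous_on[OF deriv] by (rule continuous_on_subset) (use assms in auto)
  moreover have "\<exists>D. (f has_real_derivative D) (at u) \<and> D \<le> 0" if "x < u" "u < y" for u
  proof -
    have "at u within {a..b} = at u" using that assms by (intro at_within_interior) auto
    then show ?thesis using deriv[of u] nonpos[of u] that assms by auto
  qed
  ultimately show ?thesis using DERIV_nonpos_imp_decreasing_open[of x y f] assms by auto
qed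

lemma linear_ode_decay:
  fixes u k :: "real \<Rightarrow> real"
  assumes deriv: "\<And>t. t \<in> {0..T} \<Longrightarrow> (u has_real_derivative - (k t * u t)) (at t within {0..T})"
    and rate: "\<And>t. t \<in> {0..T} \<Longrightarrow> c \<le> k t"
    and "0 \<le> T"
  shows "\<bar>u T\<bar> \<le> \<bar>u 0\<bar> * exp (- c * T)"
proof -
  define p where "p t = (u t * exp (c * t))\<^sup>2" for t
  have "p T \<le> p 0"
  proof (rule DERIV_within_nonpos_imp_nonincreasing[where f = p and a = 0 and b = T])
    show "(p has_real_derivative - (2 * (k t - c) * p t)) (at t within {0..T})" if "t \<in> {0..T}" for t
      unfolding p_def
      by (rule derivative_eq_intros deriv[OF that] | simp)+ (simp add: power2_eq_square algebra_simps)
    show "- (2 * (k t - c) * p t) \<le> 0" if "t \<in> {0..T}" for t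
      using rate[OF that] by (simp add: p_def mult_nonneg_nonneg)
  qed (use \<open>0 \<le> T\<close> in auto)
  then have "\<bar>u T * exp (c * T)\<bar> \<le> \<bar>u 0\<bar>"
    by (simp add: p_def abs_le_square_iff[symmetric])
  then show ?thesis
    by (simp add: abs_mult mult_exp_exp field_simps exp_minus)
qed

lemma cosh_taylor_bound:
  fixes u :: real
  shows "\<bar>cosh u - 1 - u\<^sup>2 / 2\<bar> \<le> exp \<bar>u\<bar> * u ^ 4 / 24"
proof -
  obtain a where a: "\<bar>a\<bar> \<le> \<bar>u\<bar>" "exp u = (\<Sum>m<4. u ^ m / fact m) + exp a / fact 4 * u ^ 4"
    using Maclaurin_exp_le[of u 4] by blast
  obtain b where b: "\<bar>b\<bar> \<le> \<bar>u\<bar>" "exp (- u) = (\<Sum>m<4. (- u) ^ m / fact m) + exp b / fact 4 * (- u) ^ 4"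
    using Maclaurin_exp_le[of "- u" 4] by auto
  have taylor: "cosh u - 1 - u\<^sup>2 / 2 = (exp a + exp b) / 2 * u ^ 4 / 24"
    using a(2) b(2) by (simp add: cosh_def fact_numeral eval_nat_numeral field_simps)
  have "exp a + exp b \<le> 2 * exp \<bar>u\<bar>"
    using a(1) b(1) by (smt (verit) exp_le_cancel_iff)
  then have "(exp a + exp b) / 2 * u ^ 4 / 24 \<le> exp \<bar>u\<bar> * u ^ 4 / 24"
    by (intro divide_right_mono mult_right_mono) auto
  moreover have "0 \<le> (exp a + exp b) / 2 * u ^ 4 / 24"
    by simp
  ultimately show ?thesis
    unfolding taylor by linarith
qed

lemma cosh_flow_decay:
  fixes u \<theta> :: "real \<Rightarrow> real"
  assumes "\<And>s. s \<in> {0..t} \<Longrightarrow> (u has_real_derivative - (2 * cosh (\<theta> s) * u s)) (at s within {0..t})"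
    and "0 \<le> t"
  shows "\<bar>u t\<bar> \<le> \<bar>u 0\<bar> * exp (- 2 * t)"
  by (rule linear_ode_decay[where k = "\<lambda>s. 2 * cosh (\<theta> s)"])
    (use assms cosh_real_ge_1 in auto)

section \<open>Uniform bounds in the coupling\<close>

definition uniform_bigo :: "real \<Rightarrow> (real \<Rightarrow> real \<Rightarrow> real) \<Rightarrow> nat \<Rightarrow> bool" where
  "uniform_bigo T F k \<longleftrightarrow> (\<exists>C. \<forall>g\<in>{0<..1}. \<forall>t\<in>{0..T}. \<bar>F g t\<bar> \<le> C * g ^ k)"

lemma uniform_bigo_bounded:
  assumes "\<And>g t. g \<in> {0<..1} \<Longrightarrow> t \<in> {0..T} \<Longrightarrow> \<bar>F g t\<bar> \<le> B"
  shows "uniform_bigo T F 0"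
  unfolding uniform_bigo_def using assms by (intro exI[of _ B]) auto

lemma uniform_bigo_id: "uniform_bigo T (\<lambda>g t. g) 1"
  unfolding uniform_bigo_def by (intro exI[of _ 1]) auto

lemma uniform_bigo_cong:
  assumes "uniform_bigo T G k"
    and "\<And>g t. g \<in> {0<..1} \<Longrightarrow> t \<in> {0..T} \<Longrightarrow> F g t = G g t"
  shows "uniform_bigo T F k"
  using assms unfolding uniform_bigo_def by simp

lemma uniform_bigo_add:
  assumes "uniform_bigo T F k" "uniform_bigo T G k"
  shows "uniform_bigo T (\<lambda>g t. F g t + G g t) k"
proof -
  obtain C D where "\<forall>g\<in>{0<..1}. \<forall>t\<in>{0..T}. \<bar>F g t\<bar> \<le> C * g ^ k"
    and "\<forall>g\<in>{0<..1}. \<forall>t\<in>{0..T}. \<bar>G g t\<bar> \<le> D * g ^ k"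
    using assms unfolding uniform_bigo_def by blast
  then show ?thesis
    unfolding uniform_bigo_def by (intro exI[of _ "C + D"]) (fastforce simp: distrib_right)
qed

lemma uniform_bigo_mono:
  assumes "uniform_bigo T F m" "k \<le> m"
  shows "uniform_bigo T F k"
proof -
  obtain C where C: "\<forall>g\<in>{0<..1}. \<forall>t\<in>{0..T}. \<bar>F g t\<bar> \<le> C * g ^ m"
    using assms unfolding uniform_bigo_def by blast
  have "\<bar>F g t\<bar> \<le> C * g ^ k" if "g \<in> {0<..1}" "t \<in> {0..T}" for g t
  proof -
    have "\<bar>F g t\<bar> \<le> C * g ^ m"
      using C that by blast
    then have "0 \<le> C * g ^ m"
      by (rule order_trans[OF abs_ge_zero])
    moreover have "0 < g ^ m"
      using that by simp
    ultimately have "0 \<le> C"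
      by (simp add: zero_le_mult_iff)
    moreover have "g ^ m \<le> g ^ k"
      using that assms(2) by (intro power_decreasing) auto
    ultimately show ?thesis
      using C that by (meson mult_left_mono order_trans)
  qed
  then show ?thesis
    unfolding uniform_bigo_def by blast
qed

lemma uniform_bigo_mult:
  assumes "uniform_bigo T F k" "uniform_bigo T G m" "n \<le> k + m"
  shows "uniform_bigo T (\<lambda>g t. F g t * G g t) n"
proof -
  obtain C D where C: "\<forall>g\<in>{0<..1}. \<forall>t\<in>{0..T}. \<bar>F g t\<bar> \<le> C * g ^ k"
    and D: "\<forall>g\<in>{0<..1}. \<forall>t\<in>{0..T}. \<bar>G g t\<bar> \<le> D * g ^ m"
    using assms unfolding uniform_bigo_def by blast
  have "\<bar>F g t * G g t\<bar> \<le> (C * D) * g ^ (k + m)" if "g \<in> {0<..1}" "t \<in> {0..T}" for g t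
  proof -
    have F: "\<bar>F g t\<bar> \<le> C * g ^ k" and G: "\<bar>G g t\<bar> \<le> D * g ^ m"
      using C D that by blast+
    have "\<bar>F g t\<bar> * \<bar>G g t\<bar> \<le> (C * g ^ k) * (D * g ^ m)"
      using mult_mono[OF F G order_trans[OF abs_ge_zero F] abs_ge_zero] .
    then show ?thesis
      by (simp add: abs_mult power_add mult_ac)
  qed
  then have "uniform_bigo T (\<lambda>g t. F g t * G g t) (k + m)"
    unfolding uniform_bigo_def by blast
  then show ?thesis
    using assms(3) by (rule uniform_bigo_mono)
qed

lemma uniform_bigo_cmult:
  assumes "uniform_bigo T F k"
  shows "uniform_bigo T (\<lambda>g t. c * F g t) k"
  by (rule uniform_bigo_mult[OF uniform_bigo_bounded[of T "\<lambda>g t. c" "\<bar>c\<bar>"] assms]) auto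

lemma uniform_bigo_integrate:
  assumes deriv: "\<And>g t. g \<in> {0<..1} \<Longrightarrow> t \<in> {0..T} \<Longrightarrow>
      (F g has_real_derivative F' g t) (at t within {0..T})"
    and initial: "\<And>g. g \<in> {0<..1} \<Longrightarrow> F g 0 = 0"
    and "uniform_bigo T F' k"
  shows "uniform_bigo T F k"
proof -
  obtain C where C: "\<forall>g\<in>{0<..1}. \<forall>t\<in>{0..T}. \<bar>F' g t\<bar> \<le> C * g ^ k"
    using assms unfolding uniform_bigo_def by blast
  have "\<bar>F g t\<bar> \<le> (C * T) * g ^ k" if g: "g \<in> {0<..1}" and t: "t \<in> {0..T}" for g t
  proof -
    have "\<bar>F g t - F g 0\<bar> \<le> C * g ^ k * \<bar>t - 0\<bar>"
      using field_differentiable_bound[of "{0..T}" "F g" "F' g" "C * g ^ k" t 0] deriv[OF g] C g t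
      by auto
    also have "\<dots> \<le> C * g ^ k * T"
    proof (rule mult_left_mono)
      have "\<bar>F' g t\<bar> \<le> C * g ^ k"
        using C g t by blast
      then show "0 \<le> C * g ^ k"
        by (rule order_trans[OF abs_ge_zero])
    qed (use t in auto)
    finally show ?thesis
      using initial[OF g] by (simp add: mult_ac)
  qed
  then show ?thesis
    unfolding uniform_bigo_def by blast
qed

lemma uniform_bigo_imp_bigo:
  assumes "uniform_bigo T F k" "t \<in> {0..T}"
  shows "(\<lambda>g. F g t) \<in> O[at_right 0](\<lambda>g. g ^ k)"
proof -
  obtain C where C: "\<forall>g\<in>{0<..1}. \<forall>t\<in>{0..T}. \<bar>F g t\<bar> \<le> C * g ^ k"
    using assms unfolding uniform_bigo_def by blast
  have "\<forall>\<^sub>F g in at_right 0. norm (F g t) \<le> C * norm (g ^ k)"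
    by (rule eventually_mono[OF eventually_at_right_real[of 0 1]]) (use C assms(2) in auto)
  then show ?thesis
    by (rule bigoI)
qed

section \<open>Second-order expansion of the reduced flow\<close>

definition correction_integral :: "real \<Rightarrow> real" where
  "correction_integral t = t - 3 / 4 + exp (- 2 * t) - exp (- 4 * t) / 4"

lemma correction_integral_0 [simp]: "correction_integral 0 = 0"
  by (simp add: correction_integral_def)

lemma correction_integral_deriv:
  "(correction_integral has_real_derivative (1 - exp (- 2 * t))\<^sup>2) (at t within S)"
proof -
  have "exp (- 4 * t) = exp (- 2 * t) * exp (- 2 * t)"
    by (simp flip: exp_add)
  then show ?thesis
    unfolding correction_integral_def
    by (auto intro!: derivative_eq_intros simp: power2_eq_square algebra_simps)
qed

lemma exp_decay_tendsto_0: "((\<lambda>t::real. exp (- 2 * t)) \<longlongrightarrow> 0) at_top"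
  by real_asymp

lemma correction_decay_tendsto_0: "((\<lambda>t::real. exp (- 2 * t) * correction_integral t) \<longlongrightarrow> 0) at_top"
  unfolding correction_integral_def by real_asymp

locale residual_flow =
  fixes \<Delta> \<tau> :: "real \<Rightarrow> real \<Rightarrow> real" and y T :: real
  assumes residual_deriv: "\<And>g t. g \<in> {0<..1} \<Longrightarrow> t \<in> {0..T} \<Longrightarrow>
      (\<Delta> g has_real_derivative - (2 * cosh (2 * \<tau> g t) * \<Delta> g t)) (at t within {0..T})"
    and angle_deriv: "\<And>g t. g \<in> {0<..1} \<Longrightarrow> t \<in> {0..T} \<Longrightarrow>
      (\<tau> g has_real_derivative g * \<Delta> g t) (at t within {0..T})"
    and residual_0: "\<And>g. g \<in> {0<..1} \<Longrightarrow> \<Delta> g 0 = y"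
    and angle_0: "\<And>g. g \<in> {0<..1} \<Longrightarrow> \<tau> g 0 = 0"
begin

lemma residual_bound:
  assumes g: "g \<in> {0<..1}" and t: "t \<in> {0..T}"
  shows "\<bar>\<Delta> g t\<bar> \<le> \<bar>y\<bar> * exp (- 2 * t)"
proof -
  have "\<bar>\<Delta> g t\<bar> \<le> \<bar>\<Delta> g 0\<bar> * exp (- 2 * t)"
  proof (rule cosh_flow_decay)
    show "(\<Delta> g has_real_derivative - (2 * cosh (2 * \<tau> g s) * \<Delta> g s)) (at s within {0..t})"
      if "s \<in> {0..t}" for s
      by (rule DERIV_subset[OF residual_deriv[OF g]]) (use that t in auto)
  qed (use t in auto)
  then show ?thesis
    using residual_0[OF g] by simp
qed

lemma residual_bounded: "uniform_bigo T \<Delta> 0"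
proof (rule uniform_bigo_bounded)
  fix g t :: real assume "g \<in> {0<..1}" "t \<in> {0..T}"
  then show "\<bar>\<Delta> g t\<bar> \<le> \<bar>y\<bar>"
    using residual_bound[of g t] by (smt (verit) atLeastAtMost_iff exp_le_one_iff mult_left_le)
qed

lemma scaled_residual_bounded: "uniform_bigo T (\<lambda>g t. \<Delta> g t * exp (2 * t)) 0"
proof (rule uniform_bigo_bounded)
  fix g t :: real assume "g \<in> {0<..1}" "t \<in> {0..T}"
  then have "\<bar>\<Delta> g t\<bar> * exp (2 * t) \<le> \<bar>y\<bar> * exp (- 2 * t) * exp (2 * t)"
    using residual_bound[of g t] by (intro mult_right_mono) auto
  then show "\<bar>\<Delta> g t * exp (2 * t)\<bar> \<le> \<bar>y\<bar>"
    by (simp add: abs_mult mult.assoc flip: exp_add)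
qed

lemma angle_bigo: "uniform_bigo T \<tau> 1"
proof (rule uniform_bigo_integrate[OF angle_deriv angle_0])
  show "uniform_bigo T (\<lambda>g t. g * \<Delta> g t) 1"
    by (rule uniform_bigo_mult[OF uniform_bigo_id residual_bounded]) simp
qed

lemma cosh_angle_taylor: "uniform_bigo T (\<lambda>g t. cosh (2 * \<tau> g t) - 1 - 2 * (\<tau> g t)\<^sup>2) 4"
proof -
  obtain C where C: "\<forall>g\<in>{0<..1}. \<forall>t\<in>{0..T}. \<bar>\<tau> g t\<bar> \<le> C * g"
    using angle_bigo unfolding uniform_bigo_def by auto
  have "\<bar>cosh (2 * \<tau> g t) - 1 - 2 * (\<tau> g t)\<^sup>2\<bar> \<le> (exp (2 * C) * 2 / 3 * C ^ 4) * g ^ 4"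
    if g: "g \<in> {0<..1}" and t: "t \<in> {0..T}" for g t
  proof -
    have \<tau>: "\<bar>\<tau> g t\<bar> \<le> C * g"
      using C g t by blast
    have "0 \<le> C * g"
      by (rule order_trans[OF abs_ge_zero \<tau>])
    then have "0 \<le> C"
      using g by (simp add: zero_le_mult_iff)
    then have "C * g \<le> C"
      using g by (simp add: mult_left_le)
    then have "exp \<bar>2 * \<tau> g t\<bar> \<le> exp (2 * C)"
      using \<tau> by simp
    moreover have "(2 * \<tau> g t) ^ 4 \<le> 16 * (C * g) ^ 4"
      using power_mono[OF \<tau>, of 4] by (simp add: power_mult_distrib power_even_abs_numeral)
    ultimately have "exp \<bar>2 * \<tau> g t\<bar> * (2 * \<tau> g t) ^ 4 / 24 \<le> exp (2 * C) * (16 * (C * g) ^ 4) / 24"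
      by (intro divide_right_mono mult_mono) auto
    moreover have "\<bar>cosh (2 * \<tau> g t) - 1 - 2 * (\<tau> g t)\<^sup>2\<bar> \<le> exp \<bar>2 * \<tau> g t\<bar> * (2 * \<tau> g t) ^ 4 / 24"
      using cosh_taylor_bound[of "2 * \<tau> g t"] by (simp add: power_mult_distrib)
    ultimately show ?thesis
      by (simp add: power_mult_distrib mult_ac)
  qed
  then show ?thesis
    unfolding uniform_bigo_def by blast
qed

lemma cosh_angle_bigo: "uniform_bigo T (\<lambda>g t. cosh (2 * \<tau> g t) - 1) 2"
proof -
  have "uniform_bigo T (\<lambda>g t. cosh (2 * \<tau> g t) - 1 - 2 * (\<tau> g t)\<^sup>2) 2"
    using cosh_angle_taylor by (rule uniform_bigo_mono) simp
  moreover have "uniform_bigo T (\<lambda>g t. 2 * (\<tau> g t * \<tau> g t)) 2"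
    by (intro uniform_bigo_cmult uniform_bigo_mult[OF angle_bigo angle_bigo]) simp
  ultimately show ?thesis
    by (rule uniform_bigo_cong[OF uniform_bigo_add]) (simp add: power2_eq_square)
qed

lemma decay_factor_bounded: "uniform_bigo T (\<lambda>g t. exp (- 2 * t)) 0"
  by (rule uniform_bigo_bounded[where B = 1]) auto

lemma scaled_residual_first_order: "uniform_bigo T (\<lambda>g t. \<Delta> g t * exp (2 * t) - y) 2"
proof (rule uniform_bigo_integrate)
  show "((\<lambda>t. \<Delta> g t * exp (2 * t) - y) has_real_derivative
      - 2 * ((cosh (2 * \<tau> g t) - 1) * (\<Delta> g t * exp (2 * t)))) (at t within {0..T})"
    if "g \<in> {0<..1}" "t \<in> {0..T}" for g t
    by (rule derivative_eq_intros residual_deriv[OF that] | simp)+ (simp add: algebra_simps)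
  show "uniform_bigo T (\<lambda>g t. - 2 * ((cosh (2 * \<tau> g t) - 1) * (\<Delta> g t * exp (2 * t)))) 2"
    by (intro uniform_bigo_cmult uniform_bigo_mult[OF cosh_angle_bigo scaled_residual_bounded]) simp
qed (simp add: residual_0)

lemma angle_first_order: "uniform_bigo T (\<lambda>g t. \<tau> g t - g * y * (1 - exp (- 2 * t)) / 2) 3"
proof (rule uniform_bigo_integrate)
  show "((\<lambda>t. \<tau> g t - g * y * (1 - exp (- 2 * t)) / 2) has_real_derivative
      g * exp (- 2 * t) * (\<Delta> g t * exp (2 * t) - y)) (at t within {0..T})"
    if "g \<in> {0<..1}" "t \<in> {0..T}" for g t
    by (rule derivative_eq_intros angle_deriv[OF that] | simp)+
      (simp add: algebra_simps flip: exp_add)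
  show "uniform_bigo T (\<lambda>g t. g * exp (- 2 * t) * (\<Delta> g t * exp (2 * t) - y)) 3"
  proof (rule uniform_bigo_mult[OF _ scaled_residual_first_order])
    show "uniform_bigo T (\<lambda>g t. g * exp (- 2 * t)) 1"
      by (rule uniform_bigo_mult[OF uniform_bigo_id decay_factor_bounded]) simp
  qed simp
qed (simp add: angle_0)

lemma scaled_residual_second_order:
  "uniform_bigo T (\<lambda>g t. \<Delta> g t * exp (2 * t) - y + g\<^sup>2 * y ^ 3 * correction_integral t) 4"
proof (rule uniform_bigo_integrate)
  show "((\<lambda>t. \<Delta> g t * exp (2 * t) - y + g\<^sup>2 * y ^ 3 * correction_integral t) has_real_derivative
      - 2 * ((cosh (2 * \<tau> g t) - 1) * (\<Delta> g t * exp (2 * t))) + g\<^sup>2 * y ^ 3 * (1 - exp (- 2 * t))\<^sup>2)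
      (at t within {0..T})"
    if "g \<in> {0<..1}" "t \<in> {0..T}" for g t
    by (rule derivative_eq_intros residual_deriv[OF that] correction_integral_deriv | simp)+
      (simp add: algebra_simps)
  define s where "s g t = g * y * (1 - exp (- 2 * t)) / 2" for g t :: real
  have s: "uniform_bigo T s 1"
  proof (rule uniform_bigo_cong[OF uniform_bigo_mult[OF uniform_bigo_id]])
    show "uniform_bigo T (\<lambda>g t. y * (1 - exp (- 2 * t)) / 2) 0"
    proof (rule uniform_bigo_bounded)
      fix g t :: real assume "t \<in> {0..T}"
      then have "\<bar>1 - exp (- 2 * t)\<bar> \<le> 1"
        by auto
      then have "\<bar>y\<bar> * \<bar>1 - exp (- 2 * t)\<bar> \<le> \<bar>y\<bar> * 1"
        by (intro mult_left_mono) auto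
      then show "\<bar>y * (1 - exp (- 2 * t)) / 2\<bar> \<le> \<bar>y\<bar>"
        by (simp add: abs_mult)
    qed
  qed (simp_all add: s_def)
  text \<open>Split \<open>cosh 2\<tau> - 1\<close> as \<open>(cosh 2\<tau> - 1 - 2\<tau>\<^sup>2) + 2 (\<tau> - s) (\<tau> + s) + 2 s\<^sup>2\<close>: the
    first two pieces are \<open>O(g\<^sup>4)\<close> by the Taylor bound and the first-order angle, and the source
    term \<open>g\<^sup>2 y\<^sup>3 (1 - e\<^sup>-\<^sup>2\<^sup>t)\<^sup>2 = 4 s\<^sup>2 y\<close> cancels the third up to \<open>4 s\<^sup>2 (\<Delta> e\<^sup>2\<^sup>t - y) = O(g\<^sup>4)\<close>.\<close>
  have split: "- 2 * ((c - 1) * p) + g\<^sup>2 * y ^ 3 * (1 - e)\<^sup>2 =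
      - 2 * ((c - 1 - 2 * a\<^sup>2) * p) + - 4 * ((a - b) * (a + b) * p) + - 4 * (b * b * (p - y))"
    if "2 * b = g * y * (1 - e)" for c p a b g e :: real
    using that by algebra
  have taylor: "uniform_bigo T (\<lambda>g t. - 2 * ((cosh (2 * \<tau> g t) - 1 - 2 * (\<tau> g t)\<^sup>2)
      * (\<Delta> g t * exp (2 * t)))) 4"
    by (intro uniform_bigo_cmult uniform_bigo_mult[OF cosh_angle_taylor scaled_residual_bounded]) simp
  have cross: "uniform_bigo T (\<lambda>g t. - 4 * ((\<tau> g t - s g t) * (\<tau> g t + s g t)
      * (\<Delta> g t * exp (2 * t)))) 4"
  proof -
    have "uniform_bigo T (\<lambda>g t. \<tau> g t - s g t) 3"
      using angle_first_order by (simp add: s_def)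
    then have "uniform_bigo T (\<lambda>g t. (\<tau> g t - s g t) * (\<tau> g t + s g t)) 4"
      by (rule uniform_bigo_mult[OF _ uniform_bigo_add[OF angle_bigo s]]) simp
    from uniform_bigo_mult[OF this scaled_residual_bounded] show ?thesis
      by (intro uniform_bigo_cmult) simp
  qed
  have square: "uniform_bigo T (\<lambda>g t. - 4 * ((s g t * s g t) * (\<Delta> g t * exp (2 * t) - y))) 4"
    by (intro uniform_bigo_cmult
        uniform_bigo_mult[OF uniform_bigo_mult[where n = 2, OF s s] scaled_residual_first_order])
      simp_all
  show "uniform_bigo T (\<lambda>g t. - 2 * ((cosh (2 * \<tau> g t) - 1) * (\<Delta> g t * exp (2 * t)))
      + g\<^sup>2 * y ^ 3 * (1 - exp (- 2 * t))\<^sup>2) 4"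
    by (rule uniform_bigo_cong[OF uniform_bigo_add[OF uniform_bigo_add[OF taylor cross] square]], rule split)
      (simp add: s_def)
qed (simp add: residual_0)

lemma residual_expansion:
  "uniform_bigo T (\<lambda>g t. \<Delta> g t - (y * exp (- 2 * t) - g\<^sup>2 * y ^ 3 * exp (- 2 * t) * correction_integral t)) 4"
  by (rule uniform_bigo_cong[OF uniform_bigo_mult[OF decay_factor_bounded scaled_residual_second_order]])
    (simp_all add: algebra_simps flip: exp_add)

end

definition task2_residual_order0 :: "real \<Rightarrow> real \<Rightarrow> real \<Rightarrow> real" where
  "task2_residual_order0 \<rho> y t = y * (1 - \<rho>) + \<rho> * y * exp (- 2 * t)"

definition task2_residual_order2 :: "real \<Rightarrow> real \<Rightarrow> real \<Rightarrow> real" where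
  "task2_residual_order2 \<rho> y t = - (\<rho> * y ^ 3 * (exp (- 2 * t) * correction_integral t))"

lemma task2_residual_order0_tendsto: "(task2_residual_order0 \<rho> y \<longlongrightarrow> y * (1 - \<rho>)) at_top"
  using tendsto_add[OF tendsto_const tendsto_mult_right_zero[OF exp_decay_tendsto_0, of "\<rho> * y"]]
  by (simp add: task2_residual_order0_def[abs_def])

lemma task2_residual_order2_tendsto: "(task2_residual_order2 \<rho> y \<longlongrightarrow> 0) at_top"
  using tendsto_minus[OF tendsto_mult_right_zero[OF correction_decay_tendsto_0, of "\<rho> * y ^ 3"]]
  by (simp add: task2_residual_order2_def[abs_def])

section \<open>Linear integral equations and Gaussian sources\<close>

lemma indefinite_integral_eq_continuous:
  fixes \<phi> H :: "real \<Rightarrow> real"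
  assumes "\<And>t. t \<in> {0..T} \<Longrightarrow> (\<phi> has_integral (H t - c)) {0..t}"
  shows "continuous_on {0..T} H"
proof (cases "0 \<le> T")
  case True
  have "\<phi> integrable_on {0..T}"
    using assms[of T] True by auto
  then have "continuous_on {0..T} (\<lambda>t. c + integral {0..t} \<phi>)"
    by (intro continuous_intros indefinite_integral_continuous_1)
  moreover have "c + integral {0..t} \<phi> = H t" if "t \<in> {0..T}" for t
    using integral_unique[OF assms[OF that]] by simp
  ultimately show ?thesis
    by (rule continuous_on_eq)
qed simp

lemma indefinite_integral_eq_deriv:
  fixes \<phi> H :: "real \<Rightarrow> real"
  assumes eq: "\<And>t. t \<in> {0..T} \<Longrightarrow> (\<phi> has_integral (H t - c)) {0..t}"
    and "continuous_on {0..T} \<phi>" and t: "t \<in> {0..T}"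
  shows "(H has_real_derivative \<phi> t) (at t within {0..T})"
proof -
  have "((\<lambda>u. c + integral {0..u} \<phi>) has_real_derivative \<phi> t) (at t within {0..T})"
    using integral_has_vector_derivative[OF assms(2) t]
    by (auto intro!: derivative_eq_intros simp: has_real_derivative_iff_has_vector_derivative)
  then show ?thesis
    by (rule has_field_derivative_transform_within[where d = 1])
      (use t integral_unique[OF eq] in auto)
qed

lemma coupled_integral_equations_solution:
  fixes f H Z \<tau> :: "real \<Rightarrow> real"
  assumes f: "continuous_on {0..T} f"
    and \<tau>: "\<And>t. t \<in> {0..T} \<Longrightarrow> (\<tau> has_real_derivative f t) (at t within {0..T})" "\<tau> 0 = 0"
    and H: "\<And>t. t \<in> {0..T} \<Longrightarrow> ((\<lambda>s. f s * Z s) has_integral (H t - a)) {0..t}"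
    and Z: "\<And>t. t \<in> {0..T} \<Longrightarrow> ((\<lambda>s. f s * H s) has_integral (Z t - b)) {0..t}"
    and t: "t \<in> {0..T}"
  shows "H t = cosh (\<tau> t) * a + sinh (\<tau> t) * b" "Z t = cosh (\<tau> t) * b + sinh (\<tau> t) * a"
proof -
  have "0 \<in> {0..T}"
    using t by auto
  then have H0: "H 0 = a" and Z0: "Z 0 = b"
    using integral_unique[OF H[of 0]] integral_unique[OF Z[of 0]] by auto
  have "continuous_on {0..T} H" "continuous_on {0..T} Z"
    using H Z by (blast intro: indefinite_integral_eq_continuous)+
  then have dH: "(H has_real_derivative f u * Z u) (at u within {0..T})"
    and dZ: "(Z has_real_derivative f u * H u) (at u within {0..T})" if "u \<in> {0..T}" for u
    using indefinite_integral_eq_deriv[OF H _ that] indefinite_integral_eq_deriv[OF Z _ that] f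
    by (auto intro: continuous_intros)
  have conserved: "A t * cosh (\<tau> t) - B t * sinh (\<tau> t) = A 0"
    if dA: "\<And>u. u \<in> {0..T} \<Longrightarrow> (A has_real_derivative f u * B u) (at u within {0..T})"
      and dB: "\<And>u. u \<in> {0..T} \<Longrightarrow> (B has_real_derivative f u * A u) (at u within {0..T})"
    for A B
  proof -
    have "\<exists>c. \<forall>u\<in>{0..T}. A u * cosh (\<tau> u) - B u * sinh (\<tau> u) = c"
      by (rule has_field_derivative_zero_constant)
        (rule derivative_eq_intros dA dB \<tau> | assumption | simp add: algebra_simps)+
    then obtain c where "\<And>u. u \<in> {0..T} \<Longrightarrow> A u * cosh (\<tau> u) - B u * sinh (\<tau> u) = c"
      by blast
    from this[OF t] this[OF \<open>0 \<in> {0..T}\<close>] show ?thesis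
      using \<tau>(2) by simp
  qed
  have inv: "H t * cosh (\<tau> t) - Z t * sinh (\<tau> t) = a" "Z t * cosh (\<tau> t) - H t * sinh (\<tau> t) = b"
    using conserved[of H Z] conserved[of Z H] dH dZ H0 Z0 by auto
  have "cosh (\<tau> t) * a + sinh (\<tau> t) * b = H t * ((cosh (\<tau> t))\<^sup>2 - (sinh (\<tau> t))\<^sup>2)"
    and "cosh (\<tau> t) * b + sinh (\<tau> t) * a = Z t * ((cosh (\<tau> t))\<^sup>2 - (sinh (\<tau> t))\<^sup>2)"
    unfolding inv[symmetric] by (simp_all add: power2_eq_square algebra_simps)
  then show "H t = cosh (\<tau> t) * a + sinh (\<tau> t) * b" "Z t = cosh (\<tau> t) * b + sinh (\<tau> t) * a"
    by (simp_all add: cosh_square_eq)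
qed

lemma (in prob_space) std_normal_moments:
  assumes "distributed M lborel X std_normal_density"
  shows "integrable M X" "integral\<^sup>L M X = 0"
    and "integrable M (\<lambda>\<omega>. (X \<omega>)\<^sup>2)" "(\<integral>\<omega>. (X \<omega>)\<^sup>2 \<partial>M) = 1"
  using distributed_integrable[OF assms, of "\<lambda>x. x"] integrable_std_normal_moment[of 1]
    distributed_integral[OF assms, of "\<lambda>x. x"] integral_std_normal_moment_odd[of 0]
    distributed_integrable[OF assms, of "\<lambda>x. x\<^sup>2"] integrable_std_normal_moment[of 2]
    distributed_integral[OF assms, of "\<lambda>x. x\<^sup>2"] integral_std_normal_moment_even[of 1]
  by (simp_all add: normal_density_nonneg)

lemma (in prob_space) indep_std_normal_orthonormal:
  assumes indep: "indep_vars (\<lambda>_. borel) X I"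
    and normal: "\<And>i. i \<in> I \<Longrightarrow> distributed M lborel (X i) std_normal_density"
    and "i \<in> I" "j \<in> I"
  shows "integrable M (\<lambda>\<omega>. X i \<omega> * X j \<omega>)"
    and "(\<integral>\<omega>. X i \<omega> * X j \<omega> \<partial>M) = (if i = j then 1 else 0)"
proof -
  note moments = std_normal_moments[OF normal]
  have "integrable M (\<lambda>\<omega>. X i \<omega> * X j \<omega>) \<and> (\<integral>\<omega>. X i \<omega> * X j \<omega> \<partial>M) = (if i = j then 1 else 0)"
  proof (cases "i = j")
    case True
    then show ?thesis
      using moments(3,4)[OF \<open>j \<in> I\<close>] by (simp add: power2_eq_square)
  next
    case False
    have "indep_vars (\<lambda>_. borel) X {i, j}"
      by (rule indep_vars_subset[OF indep]) (use assms in auto)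
    then have "integrable M (\<lambda>\<omega>. \<Prod>k\<in>{i, j}. X k \<omega>)"
      and "(\<integral>\<omega>. (\<Prod>k\<in>{i, j}. X k \<omega>) \<partial>M) = (\<Prod>k\<in>{i, j}. integral\<^sup>L M (X k))"
      using moments(1) assms(3,4) by (auto intro!: indep_vars_integrable indep_vars_lebesgue_integral)
    then show ?thesis
      using False moments(2) assms(3,4) by simp
  qed
  then show "integrable M (\<lambda>\<omega>. X i \<omega> * X j \<omega>)"
    and "(\<integral>\<omega>. X i \<omega> * X j \<omega> \<partial>M) = (if i = j then 1 else 0)"
    by auto
qed

lemma (in prob_space) indep_std_normal_covariance:
  assumes "finite I" "indep_vars (\<lambda>_. borel) X I"
    and "\<And>i. i \<in> I \<Longrightarrow> distributed M lborel (X i) std_normal_density"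
  shows "(\<integral>\<omega>. (\<Sum>i\<in>I. a i * X i \<omega>) * (\<Sum>j\<in>I. b j * X j \<omega>) \<partial>M) = (\<Sum>i\<in>I. a i * b i)"
proof -
  note ortho = indep_std_normal_orthonormal[OF assms(2,3)]
  have "(\<integral>\<omega>. (\<Sum>i\<in>I. a i * X i \<omega>) * (\<Sum>j\<in>I. b j * X j \<omega>) \<partial>M)
      = (\<integral>\<omega>. (\<Sum>i\<in>I. \<Sum>j\<in>I. a i * b j * (X i \<omega> * X j \<omega>)) \<partial>M)"
    by (simp add: sum_product mult_ac)
  also have "\<dots> = (\<Sum>i\<in>I. \<Sum>j\<in>I. a i * b j * (if i = j then 1 else 0))"
    using ortho by (simp add: integral_sum integrable_sum)
  also have "\<dots> = (\<Sum>i\<in>I. a i * b i)"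
    using assms(1) by (simp add: if_distrib cong: if_cong)
  finally show ?thesis .
qed

section \<open>The infinite-width dynamics\<close>

definition rotation_angle :: "real \<Rightarrow> (nat \<Rightarrow> real \<Rightarrow> real) \<Rightarrow> real \<Rightarrow> real" where
  "rotation_angle g0 \<Delta> t = integral {0..t} (\<lambda>s. g0 * \<Delta> 1 s)"

lemma rotation_angle_0 [simp]: "rotation_angle g0 \<Delta> 0 = 0"
  by (simp add: rotation_angle_def)

lemma iw_dynamics_angle_rate_continuous:
  assumes "iw_dynamics M \<rho> g0 y chi xi \<Delta> h z"
  shows "continuous_on {0..T} (\<lambda>s. g0 * \<Delta> 1 s)"
proof -
  have "continuous_on {0..} (\<Delta> 1)"
    by (rule DERIV_continuous_on) (use assms in \<open>auto simp: iw_dynamics_def\<close>)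
  then show ?thesis
    by (intro continuous_intros) (auto elim: continuous_on_subset)
qed

lemma iw_dynamics_angle_deriv:
  assumes "iw_dynamics M \<rho> g0 y chi xi \<Delta> h z" "t \<in> {0..T}"
  shows "(rotation_angle g0 \<Delta> has_real_derivative g0 * \<Delta> 1 t) (at t within {0..T})"
  using integral_has_vector_derivative[OF iw_dynamics_angle_rate_continuous[OF assms(1)] assms(2)]
  by (simp add: rotation_angle_def[abs_def] has_real_derivative_iff_has_vector_derivative)

locale gaussian_sources = prob_space M for M :: "'a measure" +
  fixes \<rho> :: real and chi :: "nat \<Rightarrow> 'a \<Rightarrow> real" and eta xi :: "'a \<Rightarrow> real"
  assumes chi_1_std_normal: "distributed M lborel (chi 1) std_normal_density"
    and eta_std_normal: "distributed M lborel eta std_normal_density"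
    and xi_std_normal: "distributed M lborel xi std_normal_density"
    and sources_indep: "indep_vars (\<lambda>_. borel) (\<lambda>i. [chi 1, eta, xi] ! i) {0, 1, 2}"
    and chi_2_eq: "\<forall>\<omega>\<in>space M. chi 2 \<omega> = \<rho> * chi 1 \<omega> + sqrt (1 - \<rho>\<^sup>2) * eta \<omega>"
begin

lemma source_covariance:
  "(\<integral>\<omega>. (a0 * chi 1 \<omega> + a1 * eta \<omega> + a2 * xi \<omega>) * (b0 * chi 1 \<omega> + b1 * eta \<omega> + b2 * xi \<omega>) \<partial>M)
    = a0 * b0 + a1 * b1 + a2 * b2"
proof -
  have sum3: "(\<Sum>i\<in>{0, 1, 2}. f i) = f 0 + f 1 + f 2" for f :: "nat \<Rightarrow> real"
    by (simp add: add.assoc)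
  have "distributed M lborel ([chi 1, eta, xi] ! i) std_normal_density" if "i \<in> {0, 1, 2}" for i
    using that chi_1_std_normal eta_std_normal xi_std_normal by (auto simp del: One_nat_def)
  then show ?thesis
    using indep_std_normal_covariance[OF _ sources_indep,
      of "\<lambda>i. [a0, a1, a2] ! i" "\<lambda>i. [b0, b1, b2] ! i"]
    unfolding sum3 by simp
qed

lemma iw_dynamics_fields:
  assumes dyn: "iw_dynamics M \<rho> g0 y chi xi \<Delta> h z" and t: "0 \<le> t" and \<omega>: "\<omega> \<in> space M"
  shows "h 1 t \<omega> = cosh (rotation_angle g0 \<Delta> t) * chi 1 \<omega> + sinh (rotation_angle g0 \<Delta> t) * xi \<omega>"
    and "z t \<omega> = cosh (rotation_angle g0 \<Delta> t) * xi \<omega> + sinh (rotation_angle g0 \<Delta> t) * chi 1 \<omega>"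
    and "h 2 t \<omega> = \<rho> * h 1 t \<omega> + sqrt (1 - \<rho>\<^sup>2) * eta \<omega>"
proof -
  have h_eq: "\<And>i u. i \<in> {1, 2} \<Longrightarrow> 0 \<le> u \<Longrightarrow>
      ((\<lambda>s. g0 * \<Delta> 1 s * z s \<omega> * Kx \<rho> i 1) has_integral (h i u \<omega> - chi i \<omega>)) {0..u}"
    and z_eq: "\<And>u. u \<in> {0..t} \<Longrightarrow> ((\<lambda>s. g0 * \<Delta> 1 s * h 1 s \<omega>) has_integral (z u \<omega> - xi \<omega>)) {0..u}"
    using dyn \<omega> unfolding iw_dynamics_def by auto
  have h1_eq: "((\<lambda>s. g0 * \<Delta> 1 s * z s \<omega>) has_integral (h 1 u \<omega> - chi 1 \<omega>)) {0..u}"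
    if "u \<in> {0..t}" for u
    using h_eq[of 1 u] that by (simp add: Kx_def)
  note solution = coupled_integral_equations_solution[OF iw_dynamics_angle_rate_continuous[OF dyn]
      iw_dynamics_angle_deriv[OF dyn] rotation_angle_0 h1_eq z_eq]
  show "h 1 t \<omega> = cosh (rotation_angle g0 \<Delta> t) * chi 1 \<omega> + sinh (rotation_angle g0 \<Delta> t) * xi \<omega>"
    and "z t \<omega> = cosh (rotation_angle g0 \<Delta> t) * xi \<omega> + sinh (rotation_angle g0 \<Delta> t) * chi 1 \<omega>"
    using solution t by auto
  have "((\<lambda>s. g0 * \<Delta> 1 s * z s \<omega> * \<rho>) has_integral (h 2 t \<omega> - chi 2 \<omega>)) {0..t}"
    using h_eq[of 2 t] t by (simp add: Kx_def)
  from has_integral_unique[OF this has_integral_mult_left[OF h1_eq]]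
  have "h 2 t \<omega> - chi 2 \<omega> = (h 1 t \<omega> - chi 1 \<omega>) * \<rho>"
    using t by simp
  then show "h 2 t \<omega> = \<rho> * h 1 t \<omega> + sqrt (1 - \<rho>\<^sup>2) * eta \<omega>"
    unfolding chi_2_eq[rule_format, OF \<omega>] by (simp add: right_diff_distrib mult.commute)
qed

lemma iw_dynamics_kernel:
  assumes dyn: "iw_dynamics M \<rho> g0 y chi xi \<Delta> h z" and t: "0 \<le> t"
  shows "Kker M \<rho> h z 1 1 t = 2 * cosh (2 * rotation_angle g0 \<Delta> t)"
    and "Kker M \<rho> h z 2 1 t = \<rho> * (2 * cosh (2 * rotation_angle g0 \<Delta> t))"
proof -
  define c where "c = cosh (rotation_angle g0 \<Delta> t)"
  define s where "s = sinh (rotation_angle g0 \<Delta> t)"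
  have cs: "c * c + s * s = cosh (2 * rotation_angle g0 \<Delta> t)"
    by (simp add: c_def s_def cosh_double power2_eq_square)
  note fields = iw_dynamics_fields[OF dyn t, folded c_def s_def]
  have "(\<integral>\<omega>. h 1 t \<omega> * h 1 t \<omega> \<partial>M)
      = (\<integral>\<omega>. (c * chi 1 \<omega> + 0 * eta \<omega> + s * xi \<omega>) * (c * chi 1 \<omega> + 0 * eta \<omega> + s * xi \<omega>) \<partial>M)"
    by (rule Bochner_Integration.integral_cong) (simp_all add: fields(1) del: One_nat_def)
  also have "\<dots> = c * c + s * s"
    using source_covariance[of c 0 s c 0 s] by simp
  finally have h11: "(\<integral>\<omega>. h 1 t \<omega> * h 1 t \<omega> \<partial>M) = cosh (2 * rotation_angle g0 \<Delta> t)"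
    by (simp add: cs)
  have "(\<integral>\<omega>. (z t \<omega>)\<^sup>2 \<partial>M)
      = (\<integral>\<omega>. (s * chi 1 \<omega> + 0 * eta \<omega> + c * xi \<omega>) * (s * chi 1 \<omega> + 0 * eta \<omega> + c * xi \<omega>) \<partial>M)"
    by (rule Bochner_Integration.integral_cong) (simp_all add: fields(2) power2_eq_square add.commute del: One_nat_def)
  also have "\<dots> = s * s + c * c"
    using source_covariance[of s 0 c s 0 c] by simp
  finally have zz: "(\<integral>\<omega>. (z t \<omega>)\<^sup>2 \<partial>M) = cosh (2 * rotation_angle g0 \<Delta> t)"
    by (simp add: cs add.commute)
  have "(\<integral>\<omega>. h 2 t \<omega> * h 1 t \<omega> \<partial>M)
      = (\<integral>\<omega>. ((\<rho> * c) * chi 1 \<omega> + sqrt (1 - \<rho>\<^sup>2) * eta \<omega> + (\<rho> * s) * xi \<omega>)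
          * (c * chi 1 \<omega> + 0 * eta \<omega> + s * xi \<omega>) \<partial>M)"
    by (rule Bochner_Integration.integral_cong) (simp_all add: fields(1,3) algebra_simps del: One_nat_def)
  also have "\<dots> = (\<rho> * c) * c + sqrt (1 - \<rho>\<^sup>2) * 0 + (\<rho> * s) * s"
    by (rule source_covariance)
  finally have h21: "(\<integral>\<omega>. h 2 t \<omega> * h 1 t \<omega> \<partial>M) = \<rho> * cosh (2 * rotation_angle g0 \<Delta> t)"
    by (simp add: cs[symmetric] algebra_simps)
  show "Kker M \<rho> h z 1 1 t = 2 * cosh (2 * rotation_angle g0 \<Delta> t)"
    and "Kker M \<rho> h z 2 1 t = \<rho> * (2 * cosh (2 * rotation_angle g0 \<Delta> t))"
    by (simp_all add: Kker_def Kx_def h11 zz h21 del: One_nat_def)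
qed

lemma iw_dynamics_residual_1_deriv:
  assumes dyn: "iw_dynamics M \<rho> g0 y chi xi \<Delta> h z" and t: "0 \<le> t"
  shows "(\<Delta> 1 has_real_derivative - (2 * cosh (2 * rotation_angle g0 \<Delta> t) * \<Delta> 1 t)) (at t within {0..})"
proof -
  have "(\<Delta> 1 has_real_derivative - Kker M \<rho> h z 1 1 t * \<Delta> 1 t) (at t within {0..})"
    using dyn t unfolding iw_dynamics_def by blast
  then show ?thesis
    unfolding iw_dynamics_kernel(1)[OF dyn t] by simp
qed

lemma iw_dynamics_residual_2_eq:
  assumes dyn: "iw_dynamics M \<rho> g0 y chi xi \<Delta> h z" and t: "0 \<le> t"
  shows "\<Delta> 2 t = y * (1 - \<rho>) + \<rho> * \<Delta> 1 t"
proof -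
  have "(\<Delta> 2 has_real_derivative - Kker M \<rho> h z 2 1 u * \<Delta> 1 u) (at u within {0..})" if "0 \<le> u" for u
    using dyn that unfolding iw_dynamics_def by blast
  then have "((\<lambda>u. \<Delta> 2 u - \<rho> * \<Delta> 1 u) has_real_derivative 0) (at u within {0..})" if "u \<in> {0..}" for u
    using that iw_dynamics_kernel(2)[OF dyn] iw_dynamics_residual_1_deriv[OF dyn]
    by (auto intro!: derivative_eq_intros)
  then obtain c where c: "\<And>u. u \<in> {0..} \<Longrightarrow> \<Delta> 2 u - \<rho> * \<Delta> 1 u = c"
    using has_field_derivative_zero_constant[of "{0..}" "\<lambda>u. \<Delta> 2 u - \<rho> * \<Delta> 1 u"] by auto
  moreover have "\<Delta> 1 0 = y" "\<Delta> 2 0 = y"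
    using dyn unfolding iw_dynamics_def by auto
  ultimately show ?thesis
    using c[of 0] c[of t] t by (simp add: algebra_simps)
qed

lemma iw_dynamics_residual_decay:
  assumes dyn: "iw_dynamics M \<rho> g0 y chi xi \<Delta> h z" and t: "0 \<le> t"
  shows "\<bar>\<Delta> 1 t\<bar> \<le> \<bar>y\<bar> * exp (- 2 * t)"
proof -
  have "\<bar>\<Delta> 1 t\<bar> \<le> \<bar>\<Delta> 1 0\<bar> * exp (- 2 * t)"
  proof (rule cosh_flow_decay)
    show "(\<Delta> 1 has_real_derivative - (2 * cosh (2 * rotation_angle g0 \<Delta> s) * \<Delta> 1 s)) (at s within {0..t})"
      if "s \<in> {0..t}" for s
      by (rule DERIV_subset[OF iw_dynamics_residual_1_deriv[OF dyn]]) (use that in auto)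
  qed (use t in auto)
  moreover have "\<Delta> 1 0 = y"
    using dyn unfolding iw_dynamics_def by auto
  ultimately show ?thesis
    by simp
qed

lemma iw_dynamics_residual_flow:
  assumes "\<And>g0. 0 < g0 \<Longrightarrow> iw_dynamics M \<rho> g0 y chi xi (\<Delta> g0) (h g0) (z g0)"
  shows "residual_flow (\<lambda>g. \<Delta> g 1) (\<lambda>g. rotation_angle g (\<Delta> g)) y T"
proof
  fix g t :: real assume g: "g \<in> {0<..1}" and t: "t \<in> {0..T}"
  then have dyn: "iw_dynamics M \<rho> g y chi xi (\<Delta> g) (h g) (z g)"
    using assms by auto
  show "(\<Delta> g 1 has_real_derivative - (2 * cosh (2 * rotation_angle g (\<Delta> g) t) * \<Delta> g 1 t))
      (at t within {0..T})"
    by (rule DERIV_subset[OF iw_dynamics_residual_1_deriv[OF dyn]]) (use t in auto)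
  show "(rotation_angle g (\<Delta> g) has_real_derivative g * \<Delta> g 1 t) (at t within {0..T})"
    by (rule iw_dynamics_angle_deriv[OF dyn t])
next
  fix g :: real assume "g \<in> {0<..1}"
  then show "\<Delta> g 1 0 = y"
    using assms unfolding iw_dynamics_def by auto
qed simp

lemma task2_residual_expansion:
  assumes dyn: "\<And>g0. 0 < g0 \<Longrightarrow> iw_dynamics M \<rho> g0 y chi xi (\<Delta> g0) (h g0) (z g0)"
  shows "uniform_bigo T (\<lambda>g t. \<Delta> g 2 t - (task2_residual_order0 \<rho> y t
      + g\<^sup>2 * task2_residual_order2 \<rho> y t)) 4"
proof -
  interpret residual_flow "\<lambda>g. \<Delta> g 1" "\<lambda>g. rotation_angle g (\<Delta> g)" y T
    using dyn by (rule iw_dynamics_residual_flow)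
  show ?thesis
    by (rule uniform_bigo_cong[OF uniform_bigo_cmult[OF residual_expansion, of \<rho>]])
      (simp add: iw_dynamics_residual_2_eq[OF dyn] task2_residual_order0_def
        task2_residual_order2_def algebra_simps)
qed

lemma task2_residual_tendsto:
  assumes dyn: "iw_dynamics M \<rho> g0 y chi xi \<Delta> h z"
  shows "(\<Delta> 2 \<longlongrightarrow> y * (1 - \<rho>)) at_top"
proof -
  have "((\<lambda>t. \<bar>y\<bar> * exp (- 2 * t)) \<longlongrightarrow> 0) at_top"
    by (rule tendsto_mult_right_zero[OF exp_decay_tendsto_0])
  moreover have "\<forall>\<^sub>F t in at_top. norm (\<Delta> 1 t) \<le> \<bar>y\<bar> * exp (- 2 * t)"
    by (rule eventually_mono[OF eventually_ge_at_top[of 0]])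
      (use iw_dynamics_residual_decay[OF dyn] in auto)
  ultimately have "(\<Delta> 1 \<longlongrightarrow> 0) at_top"
    by (rule Lim_null_comparison[rotated])
  then have "((\<lambda>t. y * (1 - \<rho>) + \<rho> * \<Delta> 1 t) \<longlongrightarrow> y * (1 - \<rho>) + \<rho> * 0) at_top"
    by (intro tendsto_intros)
  moreover have "\<forall>\<^sub>F t in at_top. y * (1 - \<rho>) + \<rho> * \<Delta> 1 t = \<Delta> 2 t"
    by (rule eventually_mono[OF eventually_ge_at_top[of 0]]) (simp add: iw_dynamics_residual_2_eq[OF dyn])
  ultimately show ?thesis
    by (simp add: tendsto_cong)
qed

lemma task2_loss_tendsto:
  assumes "iw_dynamics M \<rho> g0 y chi xi \<Delta> h z"
  shows "((\<lambda>t. (\<Delta> 2 t)\<^sup>2 / 2) \<longlongrightarrow> y\<^sup>2 / 2 * (1 - \<rho>)\<^sup>2) at_top"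
  using tendsto_divide[OF tendsto_power[OF task2_residual_tendsto[OF assms]] tendsto_const, of 2 2]
  by (simp add: power_mult_distrib mult.commute)

end

theorem mainTheorem4:
  fixes M :: "'a measure" and \<rho> y :: real
    and chi :: "nat \<Rightarrow> 'a \<Rightarrow> real" and xi eta :: "'a \<Rightarrow> real"
    and \<Delta> :: "real \<Rightarrow> nat \<Rightarrow> real \<Rightarrow> real"
    and h :: "real \<Rightarrow> nat \<Rightarrow> real \<Rightarrow> 'a \<Rightarrow> real"
    and z :: "real \<Rightarrow> real \<Rightarrow> 'a \<Rightarrow> real"
  assumes "prob_space M"
    and "0 \<le> \<rho>" and "\<rho> \<le> 1"
    and "distributed M lborel (chi 1) std_normal_density"
    and "distributed M lborel eta std_normal_density"
    and "distributed M lborel xi std_normal_density"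
    and "prob_space.indep_vars M (\<lambda>_. borel) (\<lambda>i. [chi 1, eta, xi] ! i) {0, 1, 2}"
    and "\<forall>\<omega>\<in>space M. chi 2 \<omega> = \<rho> * chi 1 \<omega> + sqrt (1 - \<rho>\<^sup>2) * eta \<omega>"
    and "\<forall>g0>0. iw_dynamics M \<rho> g0 y chi xi (\<Delta> g0) (h g0) (z g0)"
  shows "\<exists>D0 D1 D2 :: real \<Rightarrow> real.
           (\<forall>t\<ge>0. (\<lambda>g0. \<Delta> g0 2 t - (D0 t + g0 * D1 t + g0\<^sup>2 * D2 t))
                      \<in> O[at_right 0](\<lambda>g0. g0 ^ 3)) \<and>
           (\<forall>t\<ge>0. D1 t = 0) \<and>
           (D0 \<longlongrightarrow> y * (1 - \<rho>)) at_top \<and>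
           (D2 \<longlongrightarrow> 0) at_top \<and>
           (\<exists>L :: real \<Rightarrow> real.
              (\<forall>g0>0. ((\<lambda>t. (\<Delta> g0 2 t)\<^sup>2 / 2) \<longlongrightarrow> L g0) at_top) \<and>
              (\<lambda>g0. L g0 - y\<^sup>2 / 2 * (1 - \<rho>)\<^sup>2) \<in> O[at_right 0](\<lambda>g0. g0 ^ 3))"
proof -
  interpret gaussian_sources M \<rho> chi eta xi
    by (rule gaussian_sources.intro[OF assms(1) gaussian_sources_axioms.intro[OF assms(4-8)]])
  have dyn: "\<And>g0. 0 < g0 \<Longrightarrow> iw_dynamics M \<rho> g0 y chi xi (\<Delta> g0) (h g0) (z g0)"
    using assms(9) by blast
  have expansion: "(\<lambda>g0. \<Delta> g0 2 t - (task2_residual_order0 \<rho> y t + g0 * 0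
      + g0\<^sup>2 * task2_residual_order2 \<rho> y t)) \<in> O[at_right 0](\<lambda>g0. g0 ^ 3)" if "0 \<le> t" for t
  proof -
    have "uniform_bigo t (\<lambda>g t. \<Delta> g 2 t - (task2_residual_order0 \<rho> y t + g * 0
        + g\<^sup>2 * task2_residual_order2 \<rho> y t)) 3"
      using uniform_bigo_mono[OF task2_residual_expansion[OF dyn], of 3] by simp
    then show ?thesis
      by (rule uniform_bigo_imp_bigo) (use that in auto)
  qed
  show ?thesis
    by (rule exI[of _ "task2_residual_order0 \<rho> y"], rule exI[of _ "\<lambda>_. 0"],
        rule exI[of _ "task2_residual_order2 \<rho> y"], intro conjI exI[of _ "\<lambda>_. y\<^sup>2 / 2 * (1 - \<rho>)\<^sup>2"])
      (use expansion task2_residual_order0_tendsto task2_residual_order2_tendsto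
        task2_loss_tendsto[OF dyn] in auto)
qed

end
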